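(* Let $P=(T;U,V)$ be a 3M-DAP with $t=u=v=2$, and let $\lambda = x_u - x_v$. Then there exists a feasible solution of $P$ all of whose entries lie in the open interval $\left(\frac{x_t+\lambda}{2}, \frac{x_t-\lambda}{2}\right)$; in particular $f(P) > (x_t+\lambda)/2$.
   Context: A three-matrix division and assignment problem (3M-DAP) $P=(T;U,V)$ is specified by integers $t,u,v$ (numbers of columns), integers $s_t, s_u, s_v$ (numbers of rows) and rationals $x_t, x_u, x_v$ (required row sums), subject to: $t \ge 2$, $u \ge 2$, $v \ge 1$; if $v = 1$ then $v s_v \le (t-2)s_t$; $s_t > 0$, $s_u > 0$, $s_v \ge 0$; $s_u u + s_v v = s_t t$; $s_u x_u + s_v x_v = s_t x_t$; and $x_u/u < x_v/v$. A feasible solution assigns real values to the entries of an $s_t\times t$ matrix $T$, an $s_u \times u$ matrix $U$ and an $s_v \times v$ matrix $V$ so that every row of $T$, $U$, $V$ sums to $x_t$, $x_u$, $x_v$ respectively, and the multiset of entries of $T$ equals the multiset union of the entries of $U$ and $V$. $f(P)$ is the maximum, over feasible solutions, of the smallest entry of $T$. *)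

theory Defs
  imports Complex_Main "HOL-Library.Multiset"
begin

text \<open>A 3M-DAP P = (T;U,V): column numbers t,u,v, row numbers s_t,s_u,s_v,
  rational row sums x_t,x_u,x_v.\<close>
definition is_3mdap ::
  "nat \<Rightarrow> nat \<Rightarrow> nat \<Rightarrow> nat \<Rightarrow> nat \<Rightarrow> nat \<Rightarrow> real \<Rightarrow> real \<Rightarrow> real \<Rightarrow> bool" where
  "is_3mdap t u v st su sv xt xu xv \<longleftrightarrow>
     t \<ge> 2 \<and> u \<ge> 2 \<and> v \<ge> 1 \<and>
     (v = 1 \<longrightarrow> v * sv \<le> (t - 2) * st) \<and>
     st > 0 \<and> su > 0 \<and>
     su * u + sv * v = st * t \<and>
     real su * xu + real sv * xv = real st * xt \<and>
     xu / real u < xv / real v \<and>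
     xt \<in> \<rat> \<and> xu \<in> \<rat> \<and> xv \<in> \<rat>"

definition entries :: "nat \<Rightarrow> nat \<Rightarrow> (nat \<Rightarrow> nat \<Rightarrow> real) \<Rightarrow> real multiset" where
  "entries r c M = image_mset (\<lambda>(i,j). M i j) (mset_set ({..<r} \<times> {..<c}))"

definition feasible ::
  "nat \<Rightarrow> nat \<Rightarrow> nat \<Rightarrow> nat \<Rightarrow> nat \<Rightarrow> nat \<Rightarrow> real \<Rightarrow> real \<Rightarrow> real \<Rightarrow>
   (nat \<Rightarrow> nat \<Rightarrow> real) \<Rightarrow> (nat \<Rightarrow> nat \<Rightarrow> real) \<Rightarrow> (nat \<Rightarrow> nat \<Rightarrow> real) \<Rightarrow> bool" where
  "feasible t u v st su sv xt xu xv T U V \<longleftrightarrow>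
     (\<forall>i<st. (\<Sum>j<t. T i j) = xt) \<and>
     (\<forall>i<su. (\<Sum>j<u. U i j) = xu) \<and>
     (\<forall>i<sv. (\<Sum>j<v. V i j) = xv) \<and>
     entries st t T = entries su u U + entries sv v V"

definition f_3mdap ::
  "nat \<Rightarrow> nat \<Rightarrow> nat \<Rightarrow> nat \<Rightarrow> nat \<Rightarrow> nat \<Rightarrow> real \<Rightarrow> real \<Rightarrow> real \<Rightarrow> real" where
  "f_3mdap t u v st su sv xt xu xv =
     Sup {Min (set_mset (entries st t T)) | T U V. feasible t u v st su sv xt xu xv T U V}"

end

theory Submission
  imports Defs
begin

text \<open>Put \<open>d = x\<^sub>v - x\<^sub>u\<close>, \<open>n = s\<^sub>t = s\<^sub>u + s\<^sub>v\<close>, so that \<open>x\<^sub>t = x\<^sub>u + d s\<^sub>v / n\<close>.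
  Take the rows of \<open>T\<close> to be \<open>(a\<^sub>k, x\<^sub>t - a\<^sub>k)\<close> for \<open>k < n\<close>, with the sawtooth
  \<open>a\<^sub>k = x\<^sub>t/2 + d (n - 1 - 2 (k s\<^sub>v mod n)) / (2n)\<close>, which is \<open>n\<close>-periodic and stays
  strictly within \<open>d/2\<close> of \<open>x\<^sub>t/2\<close>, that is, inside the required interval.
  Pairing the second entry of row \<open>k\<close> with the first entry of row \<open>k + 1\<close> (cyclically)
  gives a pair summing to \<open>x\<^sub>u + d c\<^sub>k\<close>, where \<open>c\<^sub>k \<in> {0, 1}\<close> is the carry of the step
  \<open>k s\<^sub>v mod n \<mapsto> (k + 1) s\<^sub>v mod n\<close>. Exactly \<open>s\<^sub>v\<close> of these carries are 1, so the
  pairs with carry 0 form \<open>U\<close> and those with carry 1 form \<open>V\<close>.\<close>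

definition carry :: "nat \<Rightarrow> nat \<Rightarrow> nat \<Rightarrow> nat" where
  "carry n s k = Suc k * s div n - k * s div n"

lemma carry_le_one:
  assumes "s \<le> n"
  shows "carry n s k \<le> 1"
proof -
  have "Suc k * s div n \<le> (k * s + n) div n"
    using assms by (intro div_le_mono) simp
  also have "\<dots> \<le> k * s div n + 1"
    by (cases "n = 0") simp_all
  finally show ?thesis
    unfolding carry_def by simp
qed

lemma sum_carry_lessThan: "(\<Sum>k<m. carry n s k) = m * s div n"
proof (induction m)
  case (Suc m)
  have "m * s div n \<le> Suc m * s div n"
    by (simp add: div_le_mono)
  then show ?case
    using Suc by (simp add: carry_def)
qed simp

lemma length_filter_carry:
  assumes "0 < n" "s \<le> n"
  shows "length (filter (\<lambda>k. carry n s k \<noteq> 0) [0..<n]) = s"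
proof -
  have carry_one: "0 < carry n s k \<Longrightarrow> carry n s k = 1" for k
    using carry_le_one[OF assms(2), of k] by linarith
  have "length (filter (\<lambda>k. carry n s k \<noteq> 0) xs) = sum_list (map (carry n s) xs)" for xs
    by (induction xs) (auto simp: carry_one)
  also have "sum_list (map (carry n s) [0..<n]) = (\<Sum>k<n. carry n s k)"
    by (simp add: sum_list_distinct_conv_sum_set atLeast0LessThan)
  finally show ?thesis
    using assms(1) by (simp add: sum_carry_lessThan)
qed

lemma mod_Suc_mult_carry:
  "real (Suc k * s mod n) = real (k * s mod n) + real s - real n * real (carry n s k)"
proof -
  have "real (m mod n) = real m - real n * real (m div n)" for m
    by (metis add_diff_cancel_left' div_mult_mod_eq mult.commute of_nat_add of_nat_mult)
  moreover have "k * s div n \<le> Suc k * s div n"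
    by (simp add: div_le_mono)
  ultimately show ?thesis
    by (simp add: carry_def of_nat_diff algebra_simps)
qed

definition sawtooth :: "nat \<Rightarrow> nat \<Rightarrow> real \<Rightarrow> nat \<Rightarrow> real" where
  "sawtooth n s d k = d * (real n - 1 - 2 * real (k * s mod n)) / (2 * real n)"

lemma sawtooth_Suc:
  assumes "0 < n"
  shows "sawtooth n s d (Suc k) = sawtooth n s d k + d * real (carry n s k) - d * real s / real n"
proof -
  have "sawtooth n s d (Suc k) - sawtooth n s d k
          = d * (real (k * s mod n) - real (Suc k * s mod n)) / real n"
    unfolding sawtooth_def using assms by (simp add: field_simps)
  also have "\<dots> = d * real (carry n s k) - d * real s / real n"
    unfolding mod_Suc_mult_carry using assms by (simp add: field_simps)
  finally show ?thesis
    by simp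
qed

lemma abs_sawtooth_less:
  assumes "0 < n" "0 < d"
  shows "\<bar>sawtooth n s d k\<bar> < d / 2"
proof -
  have "k * s mod n < n"
    using assms(1) by simp
  then have "real (k * s mod n) + 1 \<le> real n"
    by linarith
  then have bound: "\<bar>real n - 1 - 2 * real (k * s mod n)\<bar> < real n"
    by linarith
  have "\<bar>sawtooth n s d k\<bar> = d * \<bar>real n - 1 - 2 * real (k * s mod n)\<bar> / (2 * real n)"
    using assms by (simp add: sawtooth_def abs_mult)
  also have "\<dots> < d * real n / (2 * real n)"
    using assms bound by (intro divide_strict_right_mono mult_strict_left_mono) simp_all
  also have "\<dots> = d / 2"
    using assms by simp
  finally show ?thesis .
qed

definition split_rows :: "real \<Rightarrow> (nat \<Rightarrow> real) \<Rightarrow> nat \<Rightarrow> nat \<Rightarrow> real" where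
  "split_rows c a i j = (if j = 0 then a i else c - a i)"

definition link_rows :: "real \<Rightarrow> (nat \<Rightarrow> real) \<Rightarrow> nat list \<Rightarrow> nat \<Rightarrow> nat \<Rightarrow> real" where
  "link_rows c a K i j = (if j = 0 then c - a (K ! i) else a (Suc (K ! i)))"

lemma sum_split_rows: "(\<Sum>j<2. split_rows c a i j) = c"
  by (simp add: split_rows_def numeral_2_eq_2)

lemma sum_link_rows: "(\<Sum>j<2. link_rows c a K i j) = c - a (K ! i) + a (Suc (K ! i))"
  by (simp add: link_rows_def numeral_2_eq_2)

lemma entries_two_columns:
  "entries r 2 M = mset (map (\<lambda>i. M i 0) [0..<r]) + mset (map (\<lambda>i. M i 1) [0..<r])"
proof (induction r)
  case (Suc r)
  have "{..<Suc r} \<times> {..<2} = insert (r, 0) (insert (r, 1) ({..<r} \<times> {..<2::nat}))"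
    by auto
  then have "entries (Suc r) 2 M = {# M r 0, M r 1 #} + entries r 2 M"
    by (simp add: entries_def)
  then show ?case
    using Suc by simp
qed (simp add: entries_def)

lemma entries_split_rows:
  "entries n 2 (split_rows c a) = mset (map a [0..<n]) + mset (map (\<lambda>k. c - a k) [0..<n])"
  by (simp add: entries_two_columns split_rows_def)

lemma entries_link_rows:
  "entries (length K) 2 (link_rows c a K)
     = mset (map (\<lambda>k. c - a k) K) + mset (map (\<lambda>k. a (Suc k)) K)"
proof -
  have "map (\<lambda>i. f (K ! i)) [0..<length K] = map f (map ((!) K) [0..<length K])"
    for f :: "nat \<Rightarrow> real"
    by simp
  then have reindex: "map (\<lambda>i. f (K ! i)) [0..<length K] = map f K" for f :: "nat \<Rightarrow> real"
    by (simp only: map_nth)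
  show ?thesis
    unfolding entries_two_columns link_rows_def
    by (simp add: reindex[of "\<lambda>k. c - a k"] reindex[of "\<lambda>k. a (Suc k)"])
qed

lemma mset_map_Suc_upt_periodic:
  assumes "a n = a 0"
  shows "mset (map (\<lambda>k. a (Suc k)) [0..<n]) = mset (map a [0..<n])"
proof (cases "n = 0")
  case False
  have "map (\<lambda>k. a (Suc k)) [0..<n] = map a [Suc 0..<Suc n]"
    by (simp only: map_Suc_upt[symmetric] map_map comp_def)
  also have "\<dots> = map a [Suc 0..<n] @ [a 0]"
    using False assms by simp
  finally have "map (\<lambda>k. a (Suc k)) [0..<n] = map a [Suc 0..<n] @ [a 0]" .
  moreover have "map a [0..<n] = a 0 # map a [Suc 0..<n]"
    using False by (simp add: upt_conv_Cons)
  ultimately show ?thesis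
    by simp
qed simp

lemma entries_link_rows_partition:
  fixes P :: "nat \<Rightarrow> bool"
  assumes "a n = a 0"
  defines "KP \<equiv> filter P [0..<n]" and "KN \<equiv> filter (\<lambda>k. \<not> P k) [0..<n]"
  shows "entries (length KP) 2 (link_rows c a KP) + entries (length KN) 2 (link_rows c a KN)
           = entries n 2 (split_rows c a)"
proof -
  have "mset (map f (filter P xs)) + mset (map f (filter (\<lambda>k. \<not> P k) xs)) = mset (map f xs)"
    for f :: "nat \<Rightarrow> real" and xs
    by (induction xs) auto
  then have partition: "mset (map f KP) + mset (map f KN) = mset (map f [0..<n])"
    for f :: "nat \<Rightarrow> real"
    unfolding KP_def KN_def .
  have "entries (length KP) 2 (link_rows c a KP) + entries (length KN) 2 (link_rows c a KN)
          = (mset (map (\<lambda>k. c - a k) KP) + mset (map (\<lambda>k. c - a k) KN))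
            + (mset (map (\<lambda>k. a (Suc k)) KP) + mset (map (\<lambda>k. a (Suc k)) KN))"
    by (simp add: entries_link_rows ac_simps)
  also have "\<dots> = entries n 2 (split_rows c a)"
    unfolding partition mset_map_Suc_upt_periodic[OF assms(1)] entries_split_rows
    by (simp add: ac_simps)
  finally show ?thesis .
qed

lemma entry_in_entries: "i < r \<Longrightarrow> j < c \<Longrightarrow> M i j \<in># entries r c M"
  unfolding entries_def by (force simp: image_iff)

lemma Min_entries_le_f_3mdap:
  assumes "feasible t u v st su sv xt xu xv T U V" "0 < st" "0 < t"
  shows "Min (set_mset (entries st t T)) \<le> f_3mdap t u v st su sv xt xu xv"
proof -
  define S where
    "S = {Min (set_mset (entries st t T)) |T U V. feasible t u v st su sv xt xu xv T U V}"
  have "bdd_above S"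
  proof (rule bdd_aboveI)
    fix m
    assume "m \<in> S"
    then obtain T' U' V' where m: "m = Min (set_mset (entries st t T'))"
      and feasible': "feasible t u v st su sv xt xu xv T' U' V'"
      unfolding S_def by blast
    have "m \<le> T' 0 j" if "j < t" for j
      unfolding m using that assms(2) by (intro Min_le) (simp_all add: entry_in_entries)
    then have "(\<Sum>j<t. m) \<le> (\<Sum>j<t. T' 0 j)"
      by (intro sum_mono) simp
    then show "m \<le> xt / real t"
      using feasible' assms(2,3) by (simp add: feasible_def field_simps)
  qed
  then show ?thesis
    using assms(1) unfolding f_3mdap_def S_def[symmetric] by (intro cSup_upper) (auto simp: S_def)
qed

lemma entries_sawtooth_rows_bounds:
  assumes "0 < n" "0 < d" "x \<in># entries n 2 (split_rows c (\<lambda>k. c / 2 + sawtooth n s d k))"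
  shows "c / 2 - d / 2 < x \<and> x < c / 2 + d / 2"
proof -
  obtain k where "x = c / 2 + sawtooth n s d k \<or> x = c / 2 - sawtooth n s d k"
    using assms(3) by (auto simp: entries_split_rows)
  moreover have "\<bar>sawtooth n s d k\<bar> < d / 2"
    using abs_sawtooth_less assms(1,2) by simp
  ultimately show ?thesis
    by (auto simp: abs_less_iff)
qed

lemma feasible_sawtooth:
  assumes "0 < n" "su + sv = n" "real su * xu + real sv * xv = real n * xt"
  defines "a \<equiv> \<lambda>k. xt / 2 + sawtooth n sv (xv - xu) k"
    and "KU \<equiv> filter (\<lambda>k. carry n sv k = 0) [0..<n]"
    and "KV \<equiv> filter (\<lambda>k. carry n sv k \<noteq> 0) [0..<n]"
  shows "feasible 2 2 2 n su sv xt xu xv (split_rows xt a) (link_rows xt a KU) (link_rows xt a KV)"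
proof -
  have "real n = real su + real sv"
    using assms(2) by simp
  then have "real n * xu = real n * xt - (xv - xu) * real sv"
    using assms(3) by (simp add: algebra_simps)
  then have xu_eq: "xu = xt - (xv - xu) * real sv / real n"
    using assms(1) by (simp add: field_simps)
  have link_sum: "xt - a k + a (Suc k) = xu + (xv - xu) * real (carry n sv k)" for k
    using xu_eq unfolding a_def sawtooth_Suc[OF assms(1)] by simp
  have length_KV: "length KV = sv"
    unfolding KV_def using length_filter_carry assms(1,2) by simp
  have length_KU: "length KU = su"
    using sum_length_filter_compl[of "\<lambda>k. carry n sv k = 0" "[0..<n]"] length_KV assms(2)
    unfolding KU_def KV_def by simp
  have sum_U: "(\<Sum>j<2. link_rows xt a KU i j) = xu" if "i < su" for i
  proof -
    have "KU ! i \<in> set KU"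
      using that length_KU by simp
    then have "carry n sv (KU ! i) = 0"
      unfolding KU_def by simp
    then show ?thesis
      using link_sum by (simp add: sum_link_rows)
  qed
  have sum_V: "(\<Sum>j<2. link_rows xt a KV i j) = xv" if "i < sv" for i
  proof -
    have "KV ! i \<in> set KV"
      using that length_KV by simp
    then have "carry n sv (KV ! i) = 1"
      using carry_le_one[of sv n "KV ! i"] assms(2) unfolding KV_def by simp
    then show ?thesis
      using link_sum by (simp add: sum_link_rows)
  qed
  have "a n = a 0"
    by (simp add: a_def sawtooth_def)
  from entries_link_rows_partition[of a n "\<lambda>k. carry n sv k = 0" xt, OF this]
  have "entries su 2 (link_rows xt a KU) + entries sv 2 (link_rows xt a KV)
          = entries n 2 (split_rows xt a)"
    unfolding KU_def[symmetric] KV_def[symmetric] length_KU length_KV .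
  then show ?thesis
    using sum_U sum_V by (simp add: feasible_def sum_split_rows)
qed

theorem lemma6:
  fixes st su sv :: nat and xt xu xv :: real
  assumes "is_3mdap 2 2 2 st su sv xt xu xv"
  shows "(\<exists>T U V. feasible 2 2 2 st su sv xt xu xv T U V \<and>
            (\<forall>x \<in># entries st 2 T + entries su 2 U + entries sv 2 V.
                (xt + (xu - xv)) / 2 < x \<and> x < (xt - (xu - xv)) / 2))
         \<and> f_3mdap 2 2 2 st su sv xt xu xv > (xt + (xu - xv)) / 2"
proof -
  have st: "0 < st" "su + sv = st" "real su * xu + real sv * xv = real st * xt"
    and "xu < xv"
    using assms by (auto simp: is_3mdap_def)
  define T where "T = split_rows xt (\<lambda>k. xt / 2 + sawtooth st sv (xv - xu) k)"
  obtain U V where feasible: "feasible 2 2 2 st su sv xt xu xv T U V"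
    using feasible_sawtooth[OF st] unfolding T_def by blast
  have inside: "(xt + (xu - xv)) / 2 < x \<and> x < (xt - (xu - xv)) / 2"
    if "x \<in># entries st 2 T" for x
    using entries_sawtooth_rows_bounds[OF st(1) _ that[unfolded T_def]] \<open>xu < xv\<close>
    by (simp add: field_simps)
  have "entries su 2 U + entries sv 2 V = entries st 2 T"
    using feasible by (simp add: feasible_def)
  then have all_inside: "\<forall>x \<in># entries st 2 T + entries su 2 U + entries sv 2 V.
      (xt + (xu - xv)) / 2 < x \<and> x < (xt - (xu - xv)) / 2"
    unfolding add.assoc using inside by auto
  have "(xt + (xu - xv)) / 2 < Min (set_mset (entries st 2 T))"
    using inside entry_in_entries[of 0 st 0 2 T] st(1) by (subst Min_gr_iff) auto
  also have "\<dots> \<le> f_3mdap 2 2 2 st su sv xt xu xv"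
    using Min_entries_le_f_3mdap[OF feasible st(1)] by simp
  finally show ?thesis
    using feasible all_inside by blast
qed

end
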